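(* If $\{a_n\}_{n\ge0}$ is a pm sequence, then for every $n\ge0$ the polynomial $\sum_{j=0}^{2n} a_j x^{j}/j!$ takes only nonnegative values for all $x\in\mathbb{R}$.
   Context: A sequence of reals $\{m_n\}_{n\ge0}$ is called a pm (positive moment) sequence if there is a positive Borel measure $\mu$ on $\mathbb{R}$ with finite moments of all orders such that $m_n=\int x^n\,\mu(dx)$ for all $n\ge0$. *)

theory Defs
  imports "HOL-Probability.Probability"
begin

definition pm_sequence :: "(nat \<Rightarrow> real) \<Rightarrow> bool" where
  "pm_sequence m \<longleftrightarrow>
     (\<exists>\<mu> :: real measure. sets \<mu> = sets borel \<and>
        (\<forall>n. integrable \<mu> (\<lambda>x. x ^ n)) \<and>
        (\<forall>n. m n = (\<integral>x. x ^ n \<partial>\<mu>)))"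

end

theory Submission
  imports Defs
begin

text \<open>Integrating \<open>t \<mapsto> \<Sum>\<^sub>j\<^sub>\<le>\<^sub>2\<^sub>n (x t)^j / j!\<close> against the measure gives the polynomial in
question, and the integrand is nonnegative because an even-degree Taylor polynomial of \<open>exp\<close>
is positive: for \<open>y \<ge> 0\<close> all its terms are nonnegative, and for \<open>y < 0\<close> it dominates \<open>exp y\<close>
since the Lagrange remainder \<open>exp \<xi> y^(2n+1) / (2n+1)!\<close> is negative.\<close>

lemma exp_taylor_even_pos:
  fixes y :: real
  shows "0 < (\<Sum>j = 0..2 * n. y ^ j / fact j)"
proof (cases "y \<ge> 0")
  case True
  have "(\<Sum>j = 0..2 * n. y ^ j / fact j) = 1 + (\<Sum>j = 1..2 * n. y ^ j / fact j)"
    by (simp add: sum.atLeast_Suc_atMost)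
  also have "\<dots> \<ge> 1"
    using True by (simp add: sum_nonneg)
  finally show ?thesis by simp
next
  case False
  obtain \<xi> where taylor: "exp y = (\<Sum>j<Suc (2 * n). y ^ j / fact j)
      + exp \<xi> / fact (Suc (2 * n)) * y ^ Suc (2 * n)"
    using Maclaurin_exp_le [of y "Suc (2 * n)"] by blast
  have "y ^ Suc (2 * n) \<le> 0"
    using False by (simp add: power_mult mult_nonpos_nonneg)
  then have "exp \<xi> / fact (Suc (2 * n)) * y ^ Suc (2 * n) \<le> 0"
    by (intro mult_nonneg_nonpos divide_nonneg_nonneg) auto
  moreover have "{..<Suc (2 * n)} = {0..2 * n}" by auto
  ultimately have "exp y \<le> (\<Sum>j = 0..2 * n. y ^ j / fact j)"
    using taylor by simp
  then show ?thesis
    using exp_gt_zero [of y] by linarith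
qed

lemma moment_combination_nonneg:
  fixes \<mu> :: "real measure" and c :: "nat \<Rightarrow> real"
  assumes moments: "\<And>j. integrable \<mu> (\<lambda>t. t ^ j)"
    and poly_nonneg: "\<And>t. 0 \<le> (\<Sum>j\<in>J. c j * t ^ j)"
  shows "0 \<le> (\<Sum>j\<in>J. c j * (\<integral>t. t ^ j \<partial>\<mu>))"
proof -
  have "(\<Sum>j\<in>J. c j * (\<integral>t. t ^ j \<partial>\<mu>)) = (\<Sum>j\<in>J. (\<integral>t. c j * t ^ j \<partial>\<mu>))"
    by simp
  also have "\<dots> = (\<integral>t. (\<Sum>j\<in>J. c j * t ^ j) \<partial>\<mu>)"
    using moments by (simp add: integral_sum)
  also have "\<dots> \<ge> 0"
    using poly_nonneg by (simp add: integral_nonneg_AE)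
  finally show ?thesis .
qed

theorem corollary1:
  fixes a :: "nat \<Rightarrow> real"
  assumes "pm_sequence a"
  shows "\<forall>n::nat. \<forall>x::real. 0 \<le> (\<Sum>j = 0..2 * n. a j * x ^ j / fact j)"
proof (intro allI)
  fix n :: nat and x :: real
  obtain \<mu> :: "real measure" where moments: "\<And>j. integrable \<mu> (\<lambda>t. t ^ j)"
    and a_eq: "\<And>j. a j = (\<integral>t. t ^ j \<partial>\<mu>)"
    using assms unfolding pm_sequence_def by blast
  have "\<And>t. 0 \<le> (\<Sum>j = 0..2 * n. x ^ j / fact j * t ^ j)"
    using exp_taylor_even_pos [where y = "x * t" and n = n for t]
    by (simp add: power_mult_distrib mult.commute less_imp_le)
  then have "0 \<le> (\<Sum>j = 0..2 * n. x ^ j / fact j * a j)"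
    unfolding a_eq by (rule moment_combination_nonneg [OF moments])
  then show "0 \<le> (\<Sum>j = 0..2 * n. a j * x ^ j / fact j)"
    by (simp add: mult.commute)
qed

end
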